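(* Let $\mathcal{M}$ be a von Neumann algebra with a semifinite, faithful, normal tracial weight $\tau$, and let $\alpha$ be a unitarily invariant, locally $\|\cdot\|_1$-dominating, mutually continuous norm with respect to $\tau$. Then for every $\epsilon>0$ there exists $\delta_0>0$ such that every projection $e\in\mathcal{I}$ with $\alpha(e)<\delta_0$ satisfies $\tau(e)<\epsilon$.
   Context: $\mathcal{I}=\mathrm{span}\{xey: x,y\in\mathcal{M},\ e=e^2=e^*\in\mathcal{M},\ \tau(e)<\infty\}$. A norm $\alpha:\mathcal{I}\to[0,\infty)$ is a unitarily invariant, locally $\|\cdot\|_1$-dominating, mutually continuous norm with respect to $\tau$ if: (1) $\alpha(uxv)=\alpha(x)$ for all unitaries $u,v\in\mathcal{M}$, $x\in\mathcal{I}$; (2) for every projection $e$ with $\tau(e)<\infty$ there is $0<c(e)<\infty$ with $\alpha(exe)\ge c(e)\tau(|exe|)$ for all $x\in\mathcal{I}$; (3a) if $\{e_\lambda\}$ is a net of projections in $\mathcal{I}$ with $e_\lambda\to I$ weak*, then $\alpha(e_\lambda x-x)\to0$ for all $x\in\mathcal{I}$; (3b) if $\{e_\lambda\}$ is a net of projections in $\mathcal{I}$ with $\alpha(e_\lambda)\to0$ then $\tau(e_\lambda)\to0$. *)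

theory Defs
  imports "HOL-Analysis.Analysis"
begin

class cstar_algebra = real_normed_algebra_1 + banach +
  fixes scaleC :: "complex \<Rightarrow> 'a \<Rightarrow> 'a"
    and adj :: "'a \<Rightarrow> 'a"
  assumes scaleC_add_right: "scaleC c (x + y) = scaleC c x + scaleC c y"
    and scaleC_add_left: "scaleC (c + d) x = scaleC c x + scaleC d x"
    and scaleC_scaleC: "scaleC c (scaleC d x) = scaleC (c * d) x"
    and scaleC_one: "scaleC 1 x = x"
    and scaleR_scaleC: "scaleR r x = scaleC (of_real r) x"
    and norm_scaleC: "norm (scaleC c x) = cmod c * norm x"
    and mult_scaleC_left: "scaleC c x * y = scaleC c (x * y)"
    and mult_scaleC_right: "x * scaleC c y = scaleC c (x * y)"
    and adj_adj: "adj (adj x) = x"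
    and adj_add: "adj (x + y) = adj x + adj y"
    and adj_mult: "adj (x * y) = adj y * adj x"
    and adj_scaleC: "adj (scaleC c x) = scaleC (cnj c) (adj x)"
    and cstar_identity: "norm (adj x * x) = (norm x)^2"

section \<open>W*-algebras (= von Neumann algebras, Sakai): existence of a predual\<close>

definition cfunctional_bounded_linear :: "('a::cstar_algebra \<Rightarrow> complex) \<Rightarrow> bool" where
  "cfunctional_bounded_linear f \<longleftrightarrow>
     (\<forall>x y. f (x + y) = f x + f y) \<and> (\<forall>c x. f (scaleC c x) = c * f x) \<and>
     (\<exists>K. \<forall>x. cmod (f x) \<le> K * norm x)"

definition fnorm :: "('a::cstar_algebra \<Rightarrow> complex) \<Rightarrow> real" where
  "fnorm f = Sup {cmod (f x) | x. norm x \<le> 1}"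

text \<open>F is a predual of the C*-algebra: a norm-closed complex subspace of the bounded
  linear functionals such that the canonical map x \<mapsto> (f \<mapsto> f x) is an isometric
  isomorphism of the algebra onto the dual space of F.\<close>
definition is_predual :: "('a::cstar_algebra \<Rightarrow> complex) set \<Rightarrow> bool" where
  "is_predual F \<longleftrightarrow>
     (\<forall>f\<in>F. cfunctional_bounded_linear f) \<and>
     (\<lambda>x. 0) \<in> F \<and>
     (\<forall>f\<in>F. \<forall>g\<in>F. (\<lambda>x. f x + g x) \<in> F) \<and>
     (\<forall>f\<in>F. \<forall>c. (\<lambda>x. c * f x) \<in> F) \<and>
     (\<forall>g. cfunctional_bounded_linear g \<and>
          (\<forall>\<epsilon>>0. \<exists>f\<in>F. fnorm (\<lambda>x. g x - f x) < \<epsilon>) \<longrightarrow> g \<in> F) \<and>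
     (\<forall>\<Phi> :: ('a \<Rightarrow> complex) \<Rightarrow> complex.
          (\<forall>f\<in>F. \<forall>g\<in>F. \<Phi> (\<lambda>x. f x + g x) = \<Phi> f + \<Phi> g) \<and>
          (\<forall>f\<in>F. \<forall>c. \<Phi> (\<lambda>x. c * f x) = c * \<Phi> f) \<and>
          (\<exists>K. \<forall>f\<in>F. cmod (\<Phi> f) \<le> K * fnorm f)
          \<longrightarrow> (\<exists>!x. \<forall>f\<in>F. \<Phi> f = f x)) \<and>
     (\<forall>x. norm x = Sup {cmod (f x) | f. f \<in> F \<and> fnorm f \<le> 1})"

definition weakstar_tendsto ::
    "('a::cstar_algebra \<Rightarrow> complex) set \<Rightarrow> ('b \<Rightarrow> 'a) \<Rightarrow> 'a \<Rightarrow> 'b filter \<Rightarrow> bool" where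
  "weakstar_tendsto F g x G \<longleftrightarrow> (\<forall>f\<in>F. ((\<lambda>i. f (g i)) \<longlongrightarrow> f x) G)"

definition op_pos :: "'a::cstar_algebra \<Rightarrow> bool" where
  "op_pos x \<longleftrightarrow> (\<exists>y. x = adj y * y)"

definition op_le :: "'a::cstar_algebra \<Rightarrow> 'a \<Rightarrow> bool" where
  "op_le x y \<longleftrightarrow> op_pos (y - x)"

definition is_proj :: "'a::cstar_algebra \<Rightarrow> bool" where
  "is_proj e \<longleftrightarrow> e * e = e \<and> adj e = e"

definition is_unitary :: "'a::cstar_algebra \<Rightarrow> bool" where
  "is_unitary u \<longleftrightarrow> adj u * u = 1 \<and> u * adj u = 1"

definition op_abs :: "'a::cstar_algebra \<Rightarrow> 'a" where
  "op_abs x = (THE a. op_pos a \<and> a * a = adj x * x)"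

definition tracial_weight :: "('a::cstar_algebra \<Rightarrow> ennreal) \<Rightarrow> bool" where
  "tracial_weight \<tau> \<longleftrightarrow>
     (\<forall>x y. op_pos x \<and> op_pos y \<longrightarrow> \<tau> (x + y) = \<tau> x + \<tau> y) \<and>
     (\<forall>r x. r \<ge> 0 \<and> op_pos x \<longrightarrow> \<tau> (scaleC (complex_of_real r) x) = ennreal r * \<tau> x) \<and>
     (\<forall>x. \<tau> (adj x * x) = \<tau> (x * adj x))"

definition faithful_weight :: "('a::cstar_algebra \<Rightarrow> ennreal) \<Rightarrow> bool" where
  "faithful_weight \<tau> \<longleftrightarrow> (\<forall>x. op_pos x \<and> \<tau> x = 0 \<longrightarrow> x = 0)"

definition semifinite_weight :: "('a::cstar_algebra \<Rightarrow> ennreal) \<Rightarrow> bool" where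
  "semifinite_weight \<tau> \<longleftrightarrow>
     (\<forall>x. op_pos x \<and> x \<noteq> 0 \<longrightarrow> (\<exists>y. op_pos y \<and> y \<noteq> 0 \<and> op_le y x \<and> \<tau> y < \<infinity>))"

text \<open>Normal: preserves suprema of bounded increasing nets (upward directed sets)
  of positive elements.\<close>
definition normal_weight :: "('a::cstar_algebra \<Rightarrow> ennreal) \<Rightarrow> bool" where
  "normal_weight \<tau> \<longleftrightarrow>
     (\<forall>D x. D \<noteq> {} \<and> (\<forall>d\<in>D. op_pos d) \<and>
            (\<forall>a\<in>D. \<forall>b\<in>D. \<exists>c\<in>D. op_le a c \<and> op_le b c) \<and>
            (\<forall>d\<in>D. op_le d x) \<and> (\<forall>z. (\<forall>d\<in>D. op_le d z) \<longrightarrow> op_le x z)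
        \<longrightarrow> \<tau> x = (SUP d\<in>D. \<tau> d))"

definition sfn_trace :: "('a::cstar_algebra \<Rightarrow> ennreal) \<Rightarrow> bool" where
  "sfn_trace \<tau> \<longleftrightarrow> tracial_weight \<tau> \<and> faithful_weight \<tau> \<and> semifinite_weight \<tau> \<and> normal_weight \<tau>"

definition I_gens :: "('a::cstar_algebra \<Rightarrow> ennreal) \<Rightarrow> 'a set" where
  "I_gens \<tau> = {x * e * y | x e y. is_proj e \<and> \<tau> e < \<infinity>}"

text \<open>Complex linear span; since scalars can be absorbed into x, finite sums suffice.\<close>
definition I_set :: "('a::cstar_algebra \<Rightarrow> ennreal) \<Rightarrow> 'a set" where
  "I_set \<tau> = {sum g S | S g. finite (S :: nat set) \<and> g ` S \<subseteq> I_gens \<tau>}"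

definition norm_on_I :: "('a::cstar_algebra \<Rightarrow> ennreal) \<Rightarrow> ('a \<Rightarrow> real) \<Rightarrow> bool" where
  "norm_on_I \<tau> \<alpha> \<longleftrightarrow>
     (\<forall>x\<in>I_set \<tau>. \<alpha> x \<ge> 0 \<and> (\<alpha> x = 0 \<longleftrightarrow> x = 0)) \<and>
     (\<forall>x\<in>I_set \<tau>. \<forall>y\<in>I_set \<tau>. \<alpha> (x + y) \<le> \<alpha> x + \<alpha> y) \<and>
     (\<forall>x\<in>I_set \<tau>. \<forall>c. \<alpha> (scaleC c x) = cmod c * \<alpha> x)"

definition unitarily_invariant :: "('a::cstar_algebra \<Rightarrow> ennreal) \<Rightarrow> ('a \<Rightarrow> real) \<Rightarrow> bool" where
  "unitarily_invariant \<tau> \<alpha> \<longleftrightarrow>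
     (\<forall>x\<in>I_set \<tau>. \<forall>u v. is_unitary u \<and> is_unitary v \<longrightarrow> \<alpha> (u * x * v) = \<alpha> x)"

definition locally_L1_dominating :: "('a::cstar_algebra \<Rightarrow> ennreal) \<Rightarrow> ('a \<Rightarrow> real) \<Rightarrow> bool" where
  "locally_L1_dominating \<tau> \<alpha> \<longleftrightarrow>
     (\<forall>e. is_proj e \<and> \<tau> e < \<infinity> \<longrightarrow>
        (\<exists>c>0. \<forall>x\<in>I_set \<tau>. ennreal (\<alpha> (e * x * e)) \<ge> ennreal c * \<tau> (op_abs (e * x * e))))"

text \<open>Mutual continuity. Nets of projections are represented by filters on the algebra
  (push-forwards of nets); "a net of projections in I" means eventually in that set.\<close>
definition mutually_continuous ::
    "('a::cstar_algebra \<Rightarrow> complex) set \<Rightarrow> ('a \<Rightarrow> ennreal) \<Rightarrow> ('a \<Rightarrow> real) \<Rightarrow> bool" where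
  "mutually_continuous F \<tau> \<alpha> \<longleftrightarrow>
     (\<forall>G :: 'a filter.
        eventually (\<lambda>p. is_proj p \<and> p \<in> I_set \<tau>) G \<and> weakstar_tendsto F id 1 G
        \<longrightarrow> (\<forall>x\<in>I_set \<tau>. ((\<lambda>p. \<alpha> (p * x - x)) \<longlongrightarrow> 0) G)) \<and>
     (\<forall>G :: 'a filter.
        eventually (\<lambda>p. is_proj p \<and> p \<in> I_set \<tau>) G \<and> (\<alpha> \<longlongrightarrow> 0) G
        \<longrightarrow> (\<tau> \<longlongrightarrow> 0) G)"

end

theory Submission
  imports Defs
begin

text \<open>Test the hypothesis on the filter of points satisfying P along which \<alpha> tends to 0;
  no sequences or choice are needed.\<close>
lemma tendsto_zero_transfer_imp_uniform:
  fixes \<alpha> :: "'a \<Rightarrow> real" and \<tau> :: "'a \<Rightarrow> 'b::linorder_topology"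
  assumes transfer: "\<And>G. eventually P G \<Longrightarrow> (\<alpha> \<longlongrightarrow> 0) G \<Longrightarrow> (\<tau> \<longlongrightarrow> c) G"
    and "c < \<epsilon>"
  shows "\<exists>\<delta>>0. \<forall>x. P x \<and> \<bar>\<alpha> x\<bar> < \<delta> \<longrightarrow> \<tau> x < \<epsilon>"
proof -
  define G where "G = inf (filtercomap \<alpha> (nhds 0)) (principal {x. P x})"
  have "(\<alpha> \<longlongrightarrow> 0) G"
    unfolding G_def by (rule filterlim_mono[OF filterlim_filtercomap order_refl inf_le1])
  moreover have "eventually P G"
    unfolding G_def by (simp add: eventually_inf_principal)
  ultimately have "eventually (\<lambda>x. \<tau> x < \<epsilon>) G"
    using transfer order_tendstoD(2) \<open>c < \<epsilon>\<close> by blast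
  then obtain Q where "eventually Q (nhds 0)" and Q: "\<And>x. Q (\<alpha> x) \<Longrightarrow> P x \<Longrightarrow> \<tau> x < \<epsilon>"
    unfolding G_def eventually_inf_principal eventually_filtercomap by auto
  then obtain \<delta> where "\<delta> > 0" and "\<And>y. dist y 0 < \<delta> \<Longrightarrow> Q y"
    unfolding eventually_nhds_metric by blast
  then show ?thesis
    using Q by (metis dist_real_def diff_zero)
qed

theorem lemma3p10:
  fixes F :: "('a::cstar_algebra \<Rightarrow> complex) set"
    and \<tau> :: "'a \<Rightarrow> ennreal"
    and \<alpha> :: "'a \<Rightarrow> real"
  assumes "is_predual F"
    and "sfn_trace \<tau>"
    and "norm_on_I \<tau> \<alpha>"
    and "unitarily_invariant \<tau> \<alpha>"
    and "locally_L1_dominating \<tau> \<alpha>"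
    and "mutually_continuous F \<tau> \<alpha>"
  shows "\<forall>\<epsilon>>0. \<exists>\<delta>0>0. \<forall>e. is_proj e \<and> e \<in> I_set \<tau> \<and> \<alpha> e < \<delta>0 \<longrightarrow> \<tau> e < ennreal \<epsilon>"
proof (intro allI impI)
  fix \<epsilon> :: real
  assume "\<epsilon> > 0"
  have "(\<tau> \<longlongrightarrow> 0) G"
    if "eventually (\<lambda>e. is_proj e \<and> e \<in> I_set \<tau>) G" and "(\<alpha> \<longlongrightarrow> 0) G" for G
    using assms(6) that unfolding mutually_continuous_def by blast
  moreover have "0 < ennreal \<epsilon>"
    using \<open>\<epsilon> > 0\<close> by simp
  ultimately obtain \<delta> where "\<delta> > 0"
    and small: "\<And>e. is_proj e \<and> e \<in> I_set \<tau> \<Longrightarrow> \<bar>\<alpha> e\<bar> < \<delta> \<Longrightarrow> \<tau> e < ennreal \<epsilon>"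
    using tendsto_zero_transfer_imp_uniform[of "\<lambda>e. is_proj e \<and> e \<in> I_set \<tau>" \<alpha> \<tau> 0] by blast
  have "\<alpha> e \<ge> 0" if "e \<in> I_set \<tau>" for e
    using assms(3) that unfolding norm_on_I_def by blast
  with \<open>\<delta> > 0\<close> small show "\<exists>\<delta>0>0. \<forall>e. is_proj e \<and> e \<in> I_set \<tau> \<and> \<alpha> e < \<delta>0 \<longrightarrow> \<tau> e < ennreal \<epsilon>"
    by (metis abs_of_nonneg)
qed

end
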